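(* Let $\omega\in(0,1/2)$, $\tau>0$ and $a,b>0$ degrees of freedom. Suppose the test statistic $f$ satisfies $f\mid\lambda\sim\mathrm{F}_{a,b}(\lambda)$, with $\lambda\sim(1-\omega)\delta_0+\omega\,\mathrm{G}(a/2+1,\,1/(2\tau^2))$ under $\mathrm{H}_0$ and $\lambda\sim\omega\delta_0+(1-\omega)\mathrm{G}(a/2+1,\,1/(2\tau^2))$ under $\mathrm{H}_1$. Then the Bayes factor in favor of $\mathrm{H}_1$ is $$\mathrm{BF}^t_{10}(f\mid\tau^2,\omega)=\frac{\omega+(1-\omega)R}{(1-\omega)+\omega R},$$ where $R=m_1(f\mid\tau^2)/m_0(f)$, with $m_0(f)$ the central $\mathrm{F}_{a,b}$ density at $f$ and $m_1(f\mid\tau^2)$ the marginal density of $f$ when $\lambda\sim\mathrm{G}(a/2+1,1/(2\tau^2))$, and $$R=(1+\tau^2)^{-a/2-1}\,{}_2F_1\!\left(\tfrac a2+1,\ \tfrac{a+b}{2},\ \tfrac a2;\ \frac{af\tau^2}{(1+\tau^2)(b+af)}\right).$$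
   Context: $\delta_0$ is the point mass at $0$. $\mathrm{F}_{a,b}(\lambda)$ is the noncentral F distribution with degrees of freedom $(a,b)$ and noncentrality parameter $\lambda$. $\mathrm{G}(\alpha,\theta)$ is the gamma distribution with shape $\alpha$ and rate $\theta$. ${}_2F_1(\alpha,\beta,\gamma;x)=\sum_{i\ge0}\frac{(\alpha)_i(\beta)_i}{(\gamma)_i\,i!}x^i$ is the Gauss hypergeometric function, $(\cdot)_i$ the rising factorial. The Bayes factor is the ratio of the marginal density of $f$ under $\mathrm{H}_1$ to that under $\mathrm{H}_0$. *)

theory Defs
  imports "HOL-Analysis.Analysis"
begin

definition hyp2F1 :: "real \<Rightarrow> real \<Rightarrow> real \<Rightarrow> real \<Rightarrow> real" where
  "hyp2F1 \<alpha> \<beta> \<gamma> x =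
     (\<Sum>i. pochhammer \<alpha> i * pochhammer \<beta> i / (pochhammer \<gamma> i * fact i) * x ^ i)"

definition F_density :: "real \<Rightarrow> real \<Rightarrow> real \<Rightarrow> real" where
  "F_density a b x =
     (if x > 0 then (a / b) powr (a / 2) * x powr (a / 2 - 1)
        * (1 + a * x / b) powr (- (a + b) / 2) / Beta (a / 2) (b / 2)
      else 0)"

definition ncF_density :: "real \<Rightarrow> real \<Rightarrow> real \<Rightarrow> real \<Rightarrow> real" where
  "ncF_density a b lam x =
     (if x > 0 then
        (\<Sum>k. exp (- lam / 2) * (lam / 2) ^ k / fact k
           * (a / b) powr (a / 2 + real k) * x powr (a / 2 + real k - 1)
           * (1 + a * x / b) powr (- (a + b) / 2 - real k)
           / Beta (a / 2 + real k) (b / 2))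
      else 0)"

definition gamma_density :: "real \<Rightarrow> real \<Rightarrow> real \<Rightarrow> real" where
  "gamma_density \<alpha> \<theta> x =
     (if x > 0 then \<theta> powr \<alpha> * x powr (\<alpha> - 1) * exp (- \<theta> * x) / Gamma \<alpha> else 0)"

definition m1 :: "real \<Rightarrow> real \<Rightarrow> real \<Rightarrow> real \<Rightarrow> real" where
  "m1 a b \<tau> x =
     (LINT lam|lborel. ncF_density a b lam x * gamma_density (a / 2 + 1) (1 / (2 * \<tau>\<^sup>2)) lam)"

definition spike_slab_marginal :: "real \<Rightarrow> real \<Rightarrow> real \<Rightarrow> real \<Rightarrow> real \<Rightarrow> real" where
  "spike_slab_marginal a b \<tau> p x =
     (1 - p) * ncF_density a b 0 x
     + p * (LINT lam|lborel. ncF_density a b lam x * gamma_density (a / 2 + 1) (1 / (2 * \<tau>\<^sup>2)) lam)"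

text \<open>Bayes factor in favour of H1: under H0 the slab weight is omega, under H1 it is 1-omega.\<close>
definition BF10 :: "real \<Rightarrow> real \<Rightarrow> real \<Rightarrow> real \<Rightarrow> real \<Rightarrow> real" where
  "BF10 a b \<tau> \<omega> x = spike_slab_marginal a b \<tau> (1 - \<omega>) x / spike_slab_marginal a b \<tau> \<omega> x"

end

theory Submission
  imports Defs "HOL-Real_Asymp.Real_Asymp"
begin

(* Expanded as a Poisson mixture, the noncentral F density at f has k-th term F_{a,b}(f) times
   ((a+b)/2)_k / (a/2)_k * y^k with y = af/(b+af). Integrating the Poisson weights against the
   gamma prior G(a/2+1, 1/(2 tau^2)) yields negative binomial weights
   (1+tau^2)^(-a/2-1) (a/2+1)_k / k! * q^k with q = tau^2/(1+tau^2), and monotone convergence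
   lets sum and integral be swapped; hence m1/m0 is (1+tau^2)^(-a/2-1) times the hypergeometric
   series at qy. Since the spike at 0 contributes the central density m0 = F_{a,b}(f), dividing
   both spike-and-slab marginals by m0 gives the Bayes factor. *)

lemma nn_integral_powr_mult_exp:
  fixes s c :: real
  assumes s: "s > 0" and c: "c > 0"
  shows "(\<integral>\<^sup>+x. ennreal (if x > 0 then x powr (s - 1) * exp (- c * x) else 0) \<partial>lborel)
       = ennreal (Gamma s / c powr s)"
proof -
  define G where "G = (\<lambda>t::real. ennreal (indicator {0..} t * t powr (s - 1) / exp t))"
  have [measurable]: "G \<in> borel_measurable borel" unfolding G_def by measurable
  have "(\<integral>\<^sup>+x. ennreal (if x > 0 then x powr (s - 1) * exp (- c * x) else 0) \<partial>lborel)
      = (\<integral>\<^sup>+x. ennreal (c powr (1 - s)) * G (c * x) \<partial>lborel)"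
  proof (rule nn_integral_cong)
    fix x :: real
    have "c powr (1 - s) * (c * x) powr (s - 1) = x powr (s - 1)" if "x > 0"
      using c that by (simp add: powr_mult flip: powr_add)
    then show "ennreal (if x > 0 then x powr (s - 1) * exp (- c * x) else 0)
             = ennreal (c powr (1 - s)) * G (c * x)"
      using c by (auto simp: G_def indicator_def exp_minus field_simps zero_le_mult_iff
                      simp flip: ennreal_mult)
  qed
  also have "\<dots> = ennreal (c powr (1 - s)) * (\<integral>\<^sup>+x. G (c * x) \<partial>lborel)"
    by (rule nn_integral_cmult) measurable
  also have "(\<integral>\<^sup>+x. G (c * x) \<partial>lborel) = ennreal (1 / c) * ennreal (Gamma s)"
  proof -
    have "ennreal (Gamma s) = ennreal c * (\<integral>\<^sup>+x. G (c * x) \<partial>lborel)"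
      using nn_integral_real_affine[of G c 0] c Gamma_conv_nn_integral_real[OF s] by (simp add: G_def)
    moreover have "ennreal (1 / c) * ennreal c = 1"
      using c by (simp flip: ennreal_mult)
    ultimately show ?thesis by (simp add: mult.assoc[symmetric])
  qed
  also have "ennreal (c powr (1 - s)) * (ennreal (1 / c) * ennreal (Gamma s)) = ennreal (Gamma s / c powr s)"
    using c s by (simp add: powr_diff field_simps flip: ennreal_mult)
  finally show ?thesis .
qed

lemma Gamma_add_of_nat:
  fixes x :: "'a :: Gamma"
  assumes "x \<notin> \<int>\<^sub>\<le>\<^sub>0"
  shows "Gamma (x + of_nat n) = pochhammer x n * Gamma x"
  using pochhammer_Gamma[OF assms, of n] assms by (simp add: Gamma_eq_zero_iff)

lemma Beta_add_of_nat_left: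
  fixes x y :: "'a :: Gamma"
  assumes "x \<notin> \<int>\<^sub>\<le>\<^sub>0" "x + y \<notin> \<int>\<^sub>\<le>\<^sub>0"
  shows "Beta (x + of_nat n) y = Beta x y * pochhammer x n / pochhammer (x + y) n"
proof -
  have "Gamma (x + of_nat n + y) = pochhammer (x + y) n * Gamma (x + y)"
    using Gamma_add_of_nat[OF assms(2)] by (simp add: add_ac)
  moreover have "pochhammer (x + y) n \<noteq> 0"
    using assms(2) by (auto simp: pochhammer_eq_0_iff)
  ultimately show ?thesis
    using assms by (simp add: Beta_def Gamma_add_of_nat Gamma_eq_zero_iff field_simps)
qed

lemma summable_ratio_test_tendsto:
  fixes u :: "nat \<Rightarrow> 'a :: banach"
  assumes ratio: "\<And>n. norm (u (Suc n)) \<le> r n * norm (u n)" and "r \<longlonglongrightarrow> L" and "L < 1"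
  shows "summable u"
proof -
  obtain N where N: "\<And>n. n \<ge> N \<Longrightarrow> r n < (L + 1) / 2"
    using order_tendstoD(2)[OF \<open>r \<longlonglongrightarrow> L\<close>, of "(L + 1) / 2"] \<open>L < 1\<close>
    by (auto simp: eventually_sequentially)
  show ?thesis
  proof (rule summable_ratio_test[of "(L + 1) / 2" N])
    fix n assume "n \<ge> N"
    then have "r n * norm (u n) \<le> (L + 1) / 2 * norm (u n)"
      using N[of n] by (intro mult_right_mono) auto
    then show "norm (u (Suc n)) \<le> (L + 1) / 2 * norm (u n)"
      using ratio[of n] by linarith
  qed (use \<open>L < 1\<close> in simp)
qed

lemma summable_hyp2F1_series:
  fixes \<alpha> \<beta> \<gamma> z :: real
  assumes \<gamma>: "\<gamma> \<notin> \<int>\<^sub>\<le>\<^sub>0" and z: "\<bar>z\<bar> < 1"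
  shows "summable (\<lambda>i. pochhammer \<alpha> i * pochhammer \<beta> i / (pochhammer \<gamma> i * fact i) * z ^ i)"
proof (rule summable_ratio_test_tendsto)
  let ?r = "\<lambda>n::nat. \<bar>(\<alpha> + n) * (\<beta> + n) / ((\<gamma> + n) * (real n + 1))\<bar> * \<bar>z\<bar>"
  show "?r \<longlonglongrightarrow> \<bar>z\<bar>"
    by real_asymp
  fix n
  let ?u = "\<lambda>i. pochhammer \<alpha> i * pochhammer \<beta> i / (pochhammer \<gamma> i * fact i) * z ^ i"
  have "pochhammer \<gamma> (Suc n) \<noteq> 0"
    using \<gamma> by (auto simp: pochhammer_eq_0_iff)
  then have "\<gamma> + real n \<noteq> 0" "pochhammer \<gamma> n \<noteq> 0"
    by (simp_all add: pochhammer_rec')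
  then have "?u (Suc n) = (\<alpha> + n) * (\<beta> + n) / ((\<gamma> + n) * (real n + 1)) * z * ?u n"
    by (simp only: pochhammer_rec' fact_Suc power_Suc) (simp add: field_simps)
  then show "norm (?u (Suc n)) \<le> ?r n * norm (?u n)"
    by (simp only: real_norm_def abs_mult order_refl)
qed (fact z)

lemma suminf_mult_right_of_summable:
  fixes f :: "nat \<Rightarrow> 'a :: real_normed_field"
  assumes "summable (\<lambda>k. f k * c)"
  shows "(\<Sum>k. f k) * c = (\<Sum>k. f k * c)"
proof (cases "c = 0")
  case False
  then have "summable f"
    using summable_divide[OF assms, of c] by simp
  then show ?thesis
    by (rule suminf_mult2)
qed simp

lemma
  fixes u :: "nat \<Rightarrow> 'a \<Rightarrow> real"
  assumes nonneg: "\<And>k x. 0 \<le> u k x" and [measurable]: "\<And>k. u k \<in> borel_measurable M"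
    and integral: "\<And>k. (\<integral>\<^sup>+x. u k x \<partial>M) = ennreal (c k)"
    and c_nonneg: "\<And>k. 0 \<le> c k" and c_summable: "summable c"
  shows AE_summable_of_nn_integral_summable: "AE x in M. summable (\<lambda>k. u k x)"
    and integral_suminf_of_nn_integral_summable: "(\<integral>x. (\<Sum>k. u k x) \<partial>M) = (\<Sum>k. c k)"
proof -
  have "(\<integral>\<^sup>+x. (\<Sum>k. ennreal (u k x)) \<partial>M) = (\<Sum>k. ennreal (c k))"
    by (simp add: nn_integral_suminf integral)
  also have "\<dots> = ennreal (\<Sum>k. c k)"
    using c_nonneg c_summable by (rule suminf_ennreal2)
  finally have total: "(\<integral>\<^sup>+x. (\<Sum>k. ennreal (u k x)) \<partial>M) = ennreal (\<Sum>k. c k)" .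
  then have "AE x in M. (\<Sum>k. ennreal (u k x)) \<noteq> \<infinity>"
    by (intro nn_integral_PInf_AE) simp_all
  then show summable: "AE x in M. summable (\<lambda>k. u k x)"
    by eventually_elim (rule summable_suminf_not_top[OF nonneg], simp)
  then have "AE x in M. ennreal (\<Sum>k. u k x) = (\<Sum>k. ennreal (u k x))"
    by eventually_elim (simp add: suminf_ennreal2 nonneg)
  then have "(\<integral>\<^sup>+x. ennreal (\<Sum>k. u k x) \<partial>M) = ennreal (\<Sum>k. c k)"
    using total by (simp add: nn_integral_cong_AE)
  moreover have "AE x in M. 0 \<le> (\<Sum>k. u k x)"
    using summable by eventually_elim (simp add: suminf_nonneg nonneg)
  ultimately show "(\<integral>x. (\<Sum>k. u k x) \<partial>M) = (\<Sum>k. c k)"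
    using c_nonneg c_summable by (subst integral_eq_nn_integral) (auto simp: suminf_nonneg)
qed

lemma F_density_pos:
  assumes "a > 0" "b > 0" "x > 0"
  shows "F_density a b x > 0"
proof -
  have "1 + a * x / b > 0"
    using assms by (simp add: add_pos_pos)
  then show ?thesis
    using assms by (simp add: F_density_def Beta_def Gamma_real_pos)
qed

lemma ncF_density_central: "ncF_density a b 0 x = F_density a b x"
proof -
  have "(\<Sum>k. exp (- 0 / 2) * (0 / 2) ^ k / fact k
           * (a / b) powr (a / 2 + real k) * x powr (a / 2 + real k - 1)
           * (1 + a * x / b) powr (- (a + b) / 2 - real k)
           / Beta (a / 2 + real k) (b / 2))
      = (a / b) powr (a / 2) * x powr (a / 2 - 1)
        * (1 + a * x / b) powr (- (a + b) / 2) / Beta (a / 2) (b / 2)"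
    by (subst suminf_finite[of "{0}"]) auto
  then show ?thesis
    by (simp add: ncF_density_def F_density_def)
qed

lemma ncF_density_term_eq:
  fixes a b x :: real
  assumes a: "a > 0" and b: "b > 0" and x: "x > 0"
  shows "(a / b) powr (a / 2 + real k) * x powr (a / 2 + real k - 1)
           * (1 + a * x / b) powr (- (a + b) / 2 - real k) / Beta (a / 2 + real k) (b / 2)
       = F_density a b x * pochhammer ((a + b) / 2) k / pochhammer (a / 2) k
           * (a * x / (b + a * x)) ^ k"
proof -
  define u where "u = 1 + a * x / b"
  have u: "u > 0" using a b x by (simp add: u_def add_pos_pos)
  have power_part: "(a / b) powr (a / 2 + real k) * x powr (a / 2 + real k - 1)
      = (a / b) powr (a / 2) * x powr (a / 2 - 1) * (a * x / b) ^ k"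
  proof -
    have "(a / b) powr (a / 2 + real k) = (a / b) powr (a / 2) * (a / b) ^ k"
      using a b by (simp add: powr_add powr_realpow)
    moreover have "x powr (a / 2 + real k - 1) = x powr (a / 2 - 1) * x ^ k"
      using x powr_add[of x "a / 2 - 1" "real k"] by (simp add: powr_realpow algebra_simps)
    ultimately show ?thesis
      by (simp add: power_mult_distrib power_divide)
  qed
  have u_part: "u powr (- (a + b) / 2 - real k) = u powr (- (a + b) / 2) / u ^ k"
    using u by (simp add: powr_diff powr_realpow)
  have Beta_part: "Beta (a / 2 + real k) (b / 2)
      = Beta (a / 2) (b / 2) * pochhammer (a / 2) k / pochhammer ((a + b) / 2) k"
  proof -
    have "a / 2 \<notin> \<int>\<^sub>\<le>\<^sub>0" "a / 2 + b / 2 \<notin> \<int>\<^sub>\<le>\<^sub>0"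
      using a b by (auto dest: nonpos_Ints_nonpos)
    then show ?thesis
      by (simp add: Beta_add_of_nat_left add_divide_distrib)
  qed
  have ratio_part: "(a * x / (b + a * x)) ^ k = (a * x / b) ^ k / u ^ k"
  proof -
    have "a * x / (b + a * x) = (a * x / b) / u"
      using b by (simp add: u_def field_simps)
    then show ?thesis
      by (simp only: power_divide)
  qed
  have F: "F_density a b x
      = (a / b) powr (a / 2) * x powr (a / 2 - 1) * u powr (- (a + b) / 2) / Beta (a / 2) (b / 2)"
    using x by (simp add: F_density_def u_def)
  have "(a / b) powr (a / 2 + real k) * x powr (a / 2 + real k - 1)
           * u powr (- (a + b) / 2 - real k) / Beta (a / 2 + real k) (b / 2)
      = ((a / b) powr (a / 2) * x powr (a / 2 - 1) * (a * x / b) ^ k) * (u powr (- (a + b) / 2) / u ^ k)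
        / (Beta (a / 2) (b / 2) * pochhammer (a / 2) k / pochhammer ((a + b) / 2) k)"
    by (simp only: power_part u_part Beta_part)
  also have "\<dots> = F_density a b x * pochhammer ((a + b) / 2) k / pochhammer (a / 2) k
           * ((a * x / b) ^ k / u ^ k)"
    unfolding F by (simp only: divide_inverse inverse_mult_distrib inverse_inverse_eq mult_ac)
  finally show ?thesis
    unfolding u_def ratio_part .
qed

lemma ncF_density_Poisson_series:
  fixes a b x :: real
  assumes a: "a > 0" and b: "b > 0" and x: "x > 0"
  shows "ncF_density a b lam x = (\<Sum>k. exp (- lam / 2) * (lam / 2) ^ k / fact k
           * (F_density a b x * pochhammer ((a + b) / 2) k / pochhammer (a / 2) k
              * (a * x / (b + a * x)) ^ k))"
  using x unfolding ncF_density_def ncF_density_term_eq[OF a b x, symmetric]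
  by (simp add: mult.assoc)

lemma nn_integral_Poisson_weight_gamma_density:
  fixes \<alpha> \<theta> :: real
  assumes \<alpha>: "\<alpha> > 0" and \<theta>: "\<theta> > 0"
  shows "(\<integral>\<^sup>+lam. ennreal (exp (- lam / 2) * (lam / 2) ^ k / fact k * gamma_density \<alpha> \<theta> lam) \<partial>lborel)
       = ennreal ((2 * \<theta> / (2 * \<theta> + 1)) powr \<alpha> * (pochhammer \<alpha> k / fact k) * (1 / (2 * \<theta> + 1)) ^ k)"
proof -
  define t where "t = \<theta> + 1 / 2"
  define C where "C = \<theta> powr \<alpha> / (Gamma \<alpha> * fact k * 2 ^ k)"
  have t: "t > 0" using \<theta> by (simp add: t_def)
  have C: "C \<ge> 0" using \<alpha> by (simp add: C_def)
  have "(\<integral>\<^sup>+lam. ennreal (exp (- lam / 2) * (lam / 2) ^ k / fact k * gamma_density \<alpha> \<theta> lam) \<partial>lborel)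
      = (\<integral>\<^sup>+lam. ennreal C * ennreal (if lam > 0 then lam powr (\<alpha> + real k - 1) * exp (- t * lam) else 0) \<partial>lborel)"
  proof (rule nn_integral_cong)
    fix lam :: real
    have "exp (- lam / 2) * (lam / 2) ^ k / fact k * (\<theta> powr \<alpha> * lam powr (\<alpha> - 1) * exp (- \<theta> * lam) / Gamma \<alpha>)
        = C * (lam powr (\<alpha> + real k - 1) * exp (- t * lam))" if "lam > 0"
    proof -
      have "lam powr (\<alpha> + real k - 1) = lam powr (\<alpha> - 1) * lam ^ k"
        using that powr_add[of lam "\<alpha> - 1" "real k"] by (simp add: powr_realpow algebra_simps)
      moreover have "exp (- t * lam) = exp (- lam / 2) * exp (- \<theta> * lam)"
        by (simp add: t_def algebra_simps flip: exp_add)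
      ultimately show ?thesis
        by (simp add: C_def power_divide mult_ac)
    qed
    then show "ennreal (exp (- lam / 2) * (lam / 2) ^ k / fact k * gamma_density \<alpha> \<theta> lam)
        = ennreal C * ennreal (if lam > 0 then lam powr (\<alpha> + real k - 1) * exp (- t * lam) else 0)"
      using C by (simp add: gamma_density_def mult_ac flip: ennreal_mult)
  qed
  also have "\<dots> = ennreal C * ennreal (Gamma (\<alpha> + real k) / t powr (\<alpha> + real k))"
    using \<alpha> t by (simp add: nn_integral_cmult nn_integral_powr_mult_exp)
  also have "\<dots> = ennreal (C * (Gamma (\<alpha> + real k) / t powr (\<alpha> + real k)))"
    using C \<alpha> by (intro ennreal_mult[symmetric] divide_nonneg_nonneg less_imp_le[OF Gamma_real_pos]) auto
  also have "C * (Gamma (\<alpha> + real k) / t powr (\<alpha> + real k))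
      = (2 * \<theta> / (2 * \<theta> + 1)) powr \<alpha> * (pochhammer \<alpha> k / fact k) * (1 / (2 * \<theta> + 1)) ^ k"
  proof -
    have "\<alpha> \<notin> \<int>\<^sub>\<le>\<^sub>0"
      using \<alpha> by auto
    then have "Gamma (\<alpha> + real k) = pochhammer \<alpha> k * Gamma \<alpha>"
      by (simp add: Gamma_add_of_nat)
    moreover have "t powr (\<alpha> + real k) = t powr \<alpha> * t ^ k"
      using t by (simp add: powr_add powr_realpow)
    moreover have "(2 * \<theta> / (2 * \<theta> + 1)) powr \<alpha> = \<theta> powr \<alpha> / t powr \<alpha>"
      using \<theta> by (simp add: t_def powr_divide[symmetric] field_simps)
    moreover have "(1 / (2 * \<theta> + 1)) ^ k = 1 / (2 ^ k * t ^ k)"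
      unfolding t_def power_mult_distrib[symmetric] by (simp add: power_divide distrib_left)
    moreover have "Gamma \<alpha> > 0"
      using \<alpha> by (rule Gamma_real_pos)
    ultimately show ?thesis
      using t by (simp add: C_def field_simps)
  qed
  finally show ?thesis .
qed

lemma integral_Poisson_mixture_gamma_density:
  fixes \<alpha> \<theta> :: real and t :: "nat \<Rightarrow> real"
  defines "p k \<equiv> (2 * \<theta> / (2 * \<theta> + 1)) powr \<alpha> * (pochhammer \<alpha> k / fact k) * (1 / (2 * \<theta> + 1)) ^ k"
  assumes \<alpha>: "\<alpha> > 0" and \<theta>: "\<theta> > 0" and t_nonneg: "\<And>k. t k \<ge> 0"
    and summable: "summable (\<lambda>k. t k * p k)"
  shows "(\<integral>lam. (\<Sum>k. exp (- lam / 2) * (lam / 2) ^ k / fact k * t k) * gamma_density \<alpha> \<theta> lam \<partial>lborel)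
       = (\<Sum>k. t k * p k)"
proof -
  define w where "w k lam = exp (- lam / 2) * (lam / 2) ^ k / fact k * gamma_density \<alpha> \<theta> lam"
    for k :: nat and lam :: real
  define u where "u k lam = exp (- lam / 2) * (lam / 2) ^ k / fact k * t k * gamma_density \<alpha> \<theta> lam"
    for k :: nat and lam :: real
  have u_eq: "u k lam = t k * w k lam" for k lam
    by (simp add: u_def w_def mult_ac)
  have w_nonneg: "w k lam \<ge> 0" for k lam
    using \<alpha> \<theta> by (simp add: w_def gamma_density_def)
  have u_nonneg: "u k lam \<ge> 0" for k lam
    using t_nonneg w_nonneg by (simp add: u_eq)
  have p_nonneg: "p k \<ge> 0" for k
    unfolding p_def using \<alpha> \<theta> by (intro mult_nonneg_nonneg divide_nonneg_pos less_imp_le[OF pochhammer_pos]) auto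
  have tp_nonneg: "t k * p k \<ge> 0" for k
    using t_nonneg p_nonneg by simp
  have w_measurable [measurable]: "w k \<in> borel_measurable lborel" for k
    unfolding w_def gamma_density_def by measurable
  have u_measurable [measurable]: "u k \<in> borel_measurable lborel" for k
    unfolding u_def gamma_density_def by measurable
  have integral_u: "(\<integral>\<^sup>+lam. ennreal (u k lam) \<partial>lborel) = ennreal (t k * p k)" for k
  proof -
    have "(\<integral>\<^sup>+lam. ennreal (u k lam) \<partial>lborel) = (\<integral>\<^sup>+lam. ennreal (t k) * ennreal (w k lam) \<partial>lborel)"
      using t_nonneg w_nonneg by (simp add: u_eq ennreal_mult)
    also have "\<dots> = ennreal (t k) * (\<integral>\<^sup>+lam. ennreal (w k lam) \<partial>lborel)"
      by (rule nn_integral_cmult) measurable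
    also have "(\<integral>\<^sup>+lam. ennreal (w k lam) \<partial>lborel) = ennreal (p k)"
      unfolding w_def p_def by (rule nn_integral_Poisson_weight_gamma_density[OF \<alpha> \<theta>])
    finally show ?thesis
      by (simp add: ennreal_mult t_nonneg p_nonneg)
  qed
  note series = u_nonneg u_measurable integral_u tp_nonneg summable
  \<comment> \<open>Where the Poisson series diverges its real suminf is junk; monotone convergence
    shows that this happens only on a null set.\<close>
  have "AE lam in lborel. (\<Sum>k. exp (- lam / 2) * (lam / 2) ^ k / fact k * t k) * gamma_density \<alpha> \<theta> lam
      = (\<Sum>k. u k lam)"
    using AE_summable_of_nn_integral_summable[OF series] unfolding u_def
    by eventually_elim (rule suminf_mult_right_of_summable)
  then have "(\<integral>lam. (\<Sum>k. exp (- lam / 2) * (lam / 2) ^ k / fact k * t k) * gamma_density \<alpha> \<theta> lam \<partial>lborel)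
      = (\<integral>lam. (\<Sum>k. u k lam) \<partial>lborel)"
    by (intro integral_cong_AE) (unfold gamma_density_def, measurable)
  also have "\<dots> = (\<Sum>k. t k * p k)"
    by (rule integral_suminf_of_nn_integral_summable[OF series])
  finally show ?thesis .
qed

lemma m1_eq_hyp2F1:
  fixes a b \<tau> f :: real
  assumes a: "a > 0" and b: "b > 0" and \<tau>: "\<tau> > 0" and f: "f > 0"
  shows "m1 a b \<tau> f = F_density a b f * (1 + \<tau>\<^sup>2) powr (- a / 2 - 1)
           * hyp2F1 (a / 2 + 1) ((a + b) / 2) (a / 2) (a * f * \<tau>\<^sup>2 / ((1 + \<tau>\<^sup>2) * (b + a * f)))"
proof -
  define \<alpha> where "\<alpha> = a / 2 + 1"
  define \<theta> where "\<theta> = 1 / (2 * \<tau>\<^sup>2)"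
  define y where "y = a * f / (b + a * f)"
  define q where "q = \<tau>\<^sup>2 / (1 + \<tau>\<^sup>2)"
  define T where "T k = F_density a b f * pochhammer ((a + b) / 2) k / pochhammer (a / 2) k * y ^ k"
    for k :: nat
  define p where "p k = (1 + \<tau>\<^sup>2) powr (- \<alpha>) * (pochhammer \<alpha> k / fact k) * q ^ k" for k :: nat
  define h where "h k = pochhammer \<alpha> k * pochhammer ((a + b) / 2) k / (pochhammer (a / 2) k * fact k)
      * (q * y) ^ k" for k :: nat
  have \<alpha>: "\<alpha> > 0" and \<theta>: "\<theta> > 0"
    using a \<tau> by (simp_all add: \<alpha>_def \<theta>_def)
  have p_eq: "p k = (2 * \<theta> / (2 * \<theta> + 1)) powr \<alpha> * (pochhammer \<alpha> k / fact k) * (1 / (2 * \<theta> + 1)) ^ k"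
    for k
  proof -
    have "2 * \<theta> / (2 * \<theta> + 1) = inverse (1 + \<tau>\<^sup>2)" "1 / (2 * \<theta> + 1) = q"
      using \<tau> by (simp_all add: \<theta>_def q_def field_simps)
    then show ?thesis
      by (simp add: p_def powr_minus inverse_powr)
  qed
  have T_nonneg: "T k \<ge> 0" for k
    using a b f by (simp add: T_def y_def F_density_pos less_imp_le pochhammer_pos)
  have Tp_eq: "T k * p k = F_density a b f * (1 + \<tau>\<^sup>2) powr (- \<alpha>) * h k" for k
    unfolding T_def p_def h_def
    by (simp only: divide_inverse inverse_mult_distrib power_mult_distrib mult_ac)
  have "\<bar>q * y\<bar> < 1"
    using a b f \<tau> by (simp add: q_def y_def abs_mult field_simps add_pos_pos)
  moreover have "a / 2 \<notin> \<int>\<^sub>\<le>\<^sub>0"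
    using a by auto
  ultimately have "summable h"
    unfolding h_def by (rule summable_hyp2F1_series[rotated])
  then have "summable (\<lambda>k. T k * p k)"
    unfolding Tp_eq by (rule summable_mult)
  then have "m1 a b \<tau> f = (\<Sum>k. T k * p k)"
    using integral_Poisson_mixture_gamma_density[OF \<alpha> \<theta> T_nonneg]
    unfolding m1_def \<alpha>_def[symmetric] \<theta>_def[symmetric] p_eq
    by (simp add: ncF_density_Poisson_series[OF a b f] T_def y_def)
  also have "\<dots> = F_density a b f * (1 + \<tau>\<^sup>2) powr (- \<alpha>) * hyp2F1 \<alpha> ((a + b) / 2) (a / 2) (q * y)"
    unfolding Tp_eq hyp2F1_def h_def[symmetric] using \<open>summable h\<close> by (rule suminf_mult)
  also have "q * y = a * f * \<tau>\<^sup>2 / ((1 + \<tau>\<^sup>2) * (b + a * f))"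
    by (simp add: q_def y_def mult_ac)
  also have "- \<alpha> = - a / 2 - 1"
    by (simp add: \<alpha>_def)
  finally show ?thesis
    by (simp only: \<alpha>_def)
qed

theorem proposition7:
  fixes \<omega> \<tau> a b f :: real
  assumes "0 < \<omega>" "\<omega> < 1 / 2" "\<tau> > 0" "a > 0" "b > 0" "f > 0"
  defines "R \<equiv> m1 a b \<tau> f / F_density a b f"
  shows "BF10 a b \<tau> \<omega> f = (\<omega> + (1 - \<omega>) * R) / ((1 - \<omega>) + \<omega> * R)
         \<and> R = (1 + \<tau>\<^sup>2) powr (- a / 2 - 1)
             * hyp2F1 (a / 2 + 1) ((a + b) / 2) (a / 2)
                 (a * f * \<tau>\<^sup>2 / ((1 + \<tau>\<^sup>2) * (b + a * f)))"
proof
  have F_pos: "F_density a b f > 0"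
    using assms by (simp add: F_density_pos)
  then have m1: "m1 a b \<tau> f = R * F_density a b f"
    by (simp add: R_def)
  have "BF10 a b \<tau> \<omega> f = (\<omega> * F_density a b f + (1 - \<omega>) * m1 a b \<tau> f)
      / ((1 - \<omega>) * F_density a b f + \<omega> * m1 a b \<tau> f)"
    by (simp add: BF10_def spike_slab_marginal_def ncF_density_central flip: m1_def)
  also have "\<dots> = ((\<omega> + (1 - \<omega>) * R) * F_density a b f) / (((1 - \<omega>) + \<omega> * R) * F_density a b f)"
    unfolding m1 by (simp add: algebra_simps)
  finally show "BF10 a b \<tau> \<omega> f = (\<omega> + (1 - \<omega>) * R) / ((1 - \<omega>) + \<omega> * R)"
    using F_pos by simp
  show "R = (1 + \<tau>\<^sup>2) powr (- a / 2 - 1)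
      * hyp2F1 (a / 2 + 1) ((a + b) / 2) (a / 2) (a * f * \<tau>\<^sup>2 / ((1 + \<tau>\<^sup>2) * (b + a * f)))"
    using F_pos assms by (simp add: R_def m1_eq_hyp2F1)
qed

end
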